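(* Let $n,m\ge 1$, let $c_1,\dots,c_n>0$, $T>0$, $\epsilon>0$, let $r_1,\dots,r_m>0$, and let $\kappa_{ij}\ge 0$ ($i=1,\dots,m$, $j=1,\dots,n$). For $j=1,\dots,n$ define $\beta_j:\mathbb{R}\to\mathbb{R}$ by $\beta_j(q_j)=0$ if $q_j\le c_j$ and $\beta_j(q_j)=q_j-c_j-c_j\log(q_j/c_j)$ if $q_j>c_j$. Consider the optimization problem in the variables $X=(x_{ij})\in\mathbb{R}^{m\times n}$ and $q=(q_j)\in\mathbb{R}^n$: $$\min\ C(X,q):=\sum_{i,j}\kappa_{ij}x_{ij}+\sum_j\beta_j(q_j)+\epsilon\sum_{i,j}x_{ij}\log\Big(\frac{x_{ij}}{r_i}\Big)$$ subject to $x_{ij}\ge 0$ for all $i,j$; $\sum_j x_{ij}=r_i$ for all $i$; and $\sum_i x_{ij}=q_j/T$ for all $j$. Then this problem is feasible and has a unique optimal point $(X^*,q^* )$.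
   Context: The convention $0\log 0=0$ is used in the entropy term. Interpretation: $j$ indexes EV charging stations with capacities $c_j$, $i$ indexes demand locations with request rates $r_i$, $\kappa_{ij}$ are travel times, $T$ is the mean sojourn time. *)

theory Defs
  imports "HOL-Analysis.Analysis"
begin

text \<open>Indices: demand locations i \<in> {..<m}, stations j \<in> {..<n}.
  Matrices/vectors are functions on nat, required to vanish outside the index range
  so that optimal points are represented canonically.\<close>

definition beta :: "real \<Rightarrow> real \<Rightarrow> real" where
  "beta c q = (if q \<le> c then 0 else q - c - c * ln (q / c))"

definition xlogx_r :: "real \<Rightarrow> real \<Rightarrow> real" where
  "xlogx_r x r = (if x = 0 then 0 else x * ln (x / r))"

definition cost ::
  "nat \<Rightarrow> nat \<Rightarrow> (nat \<Rightarrow> real) \<Rightarrow> (nat \<Rightarrow> real) \<Rightarrow> (nat \<Rightarrow> nat \<Rightarrow> real) \<Rightarrow> real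
   \<Rightarrow> (nat \<Rightarrow> nat \<Rightarrow> real) \<Rightarrow> (nat \<Rightarrow> real) \<Rightarrow> real" where
  "cost m n c r \<kappa> \<epsilon> X q =
     (\<Sum>i<m. \<Sum>j<n. \<kappa> i j * X i j) + (\<Sum>j<n. beta (c j) (q j))
     + \<epsilon> * (\<Sum>i<m. \<Sum>j<n. xlogx_r (X i j) (r i))"

definition feasible ::
  "nat \<Rightarrow> nat \<Rightarrow> (nat \<Rightarrow> real) \<Rightarrow> real \<Rightarrow> (nat \<Rightarrow> nat \<Rightarrow> real) \<Rightarrow> (nat \<Rightarrow> real) \<Rightarrow> bool" where
  "feasible m n r T X q \<longleftrightarrow>
     (\<forall>i<m. \<forall>j<n. X i j \<ge> 0) \<and>
     (\<forall>i<m. (\<Sum>j<n. X i j) = r i) \<and>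
     (\<forall>j<n. (\<Sum>i<m. X i j) = q j / T) \<and>
     (\<forall>i j. (i \<ge> m \<or> j \<ge> n) \<longrightarrow> X i j = 0) \<and>
     (\<forall>j\<ge>n. q j = 0)"

definition optimal ::
  "nat \<Rightarrow> nat \<Rightarrow> (nat \<Rightarrow> real) \<Rightarrow> (nat \<Rightarrow> real) \<Rightarrow> real \<Rightarrow> (nat \<Rightarrow> nat \<Rightarrow> real) \<Rightarrow> real
   \<Rightarrow> (nat \<Rightarrow> nat \<Rightarrow> real) \<Rightarrow> (nat \<Rightarrow> real) \<Rightarrow> bool" where
  "optimal m n c r T \<kappa> \<epsilon> X q \<longleftrightarrow>
     feasible m n r T X q \<and>
     (\<forall>Y p. feasible m n r T Y p \<longrightarrow> cost m n c r \<kappa> \<epsilon> X q \<le> cost m n c r \<kappa> \<epsilon> Y p)"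

end

theory Submission
  imports Defs "HOL-Real_Asymp.Real_Asymp"
begin

text \<open>The constraints determine \<open>q\<close> from \<open>X\<close>, so the problem is the minimisation of a
  function of \<open>X\<close> over the transport polytope \<open>{X \<ge> 0, \<Sum>\<^sub>j x\<^sub>i\<^sub>j = r\<^sub>i}\<close>, which is nonempty
  and compact. The cost is continuous there, hence a minimiser exists. The entropy term is
  strictly convex in \<open>X\<close> and the other two terms are convex, so the midpoint of two distinct
  minimisers would be a feasible point of strictly smaller cost.\<close>

lemma ex1_minimizer_midpoint:
  fixes f :: "'a::topological_space \<Rightarrow> real"
  assumes "compact S" "S \<noteq> {}" "continuous_on S f"
    and midpoint: "\<And>x y. x \<in> S \<Longrightarrow> y \<in> S \<Longrightarrow> x \<noteq> y \<Longrightarrow>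
      mid x y \<in> S \<and> f (mid x y) < (f x + f y) / 2"
  shows "\<exists>!x. x \<in> S \<and> (\<forall>y\<in>S. f x \<le> f y)"
proof -
  obtain x where x: "x \<in> S" "\<forall>y\<in>S. f x \<le> f y"
    using continuous_attains_inf[OF assms(1-3)] by blast
  have "y = x" if y: "y \<in> S" "\<forall>z\<in>S. f y \<le> f z" for y
  proof (rule ccontr)
    assume "y \<noteq> x"
    with midpoint x y have "mid y x \<in> S" "f (mid y x) < (f y + f x) / 2" by auto
    with x y show False by force
  qed
  with x show ?thesis by blast
qed

lemma ex1_graph:
  assumes "\<exists>!x. P x"
  shows "\<exists>!xy. P (fst xy) \<and> snd xy = g (fst xy)"
  using assms by (metis fst_conv prod.collapse snd_conv)

subsection \<open>Convexity of the cost terms\<close>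

lemma xlogx_r_above_tangent:
  fixes x s r :: real
  assumes "0 \<le> x" "0 < s" "0 < r" "x \<noteq> s"
  shows "xlogx_r s r + (ln (s / r) + 1) * (x - s) < xlogx_r x r"
proof (cases "x = 0")
  case True
  with assms show ?thesis by (simp add: xlogx_r_def algebra_simps)
next
  case False
  with assms have "x > 0" by simp
  have "ln (s / x) \<noteq> s / x - 1"
    using ln_eq_minus_one[of "s / x"] \<open>x > 0\<close> assms by auto
  with ln_le_minus_one[of "s / x"] \<open>x > 0\<close> assms have "ln (s / x) < s / x - 1" by simp
  with \<open>x > 0\<close> have "x * ln (s / x) < s - x"
    by (simp add: field_simps mult_strict_left_mono)
  moreover have "xlogx_r x r = x * ln (s / r) - x * ln (s / x)"
    using \<open>x > 0\<close> assms by (simp add: xlogx_r_def ln_div algebra_simps)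
  moreover have "xlogx_r s r = s * ln (s / r)"
    using assms by (simp add: xlogx_r_def)
  ultimately show ?thesis by (simp add: algebra_simps)
qed

lemma xlogx_r_midpoint_less:
  fixes x y r :: real
  assumes "0 \<le> x" "0 \<le> y" "0 < r" "x \<noteq> y"
  shows "xlogx_r ((x + y) / 2) r < (xlogx_r x r + xlogx_r y r) / 2"
proof -
  define s where "s = (x + y) / 2"
  have "0 < s" "x \<noteq> s" "y \<noteq> s" using assms by (auto simp: s_def)
  then have "xlogx_r s r + (ln (s / r) + 1) * (x - s) < xlogx_r x r"
    "xlogx_r s r + (ln (s / r) + 1) * (y - s) < xlogx_r y r"
    using assms by (auto intro: xlogx_r_above_tangent)
  moreover have "(ln (s / r) + 1) * (x - s) + (ln (s / r) + 1) * (y - s) = 0"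
    by (simp add: s_def algebra_simps)
  ultimately show ?thesis unfolding s_def[symmetric] by argo
qed

lemma xlogx_r_midpoint_le:
  fixes x y r :: real
  assumes "0 \<le> x" "0 \<le> y" "0 < r"
  shows "xlogx_r ((x + y) / 2) r \<le> (xlogx_r x r + xlogx_r y r) / 2"
  using xlogx_r_midpoint_less[OF assms] by (cases "x = y") (auto simp: less_imp_le)

definition beta_tail :: "real \<Rightarrow> real \<Rightarrow> real" where
  "beta_tail c t = t - c - c * ln (t / c)"

lemma beta_eq_beta_tail_max: "0 < c \<Longrightarrow> beta c q = beta_tail c (max q c)"
  by (simp add: beta_def beta_tail_def max_def)

lemma convex_on_beta_tail: "0 < c \<Longrightarrow> convex_on {c..} (beta_tail c)"
  unfolding beta_tail_def
  by (rule convex_on_realI[where f' = "\<lambda>t. 1 - c / t"])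
     (auto intro!: derivative_eq_intros divide_left_mono simp: field_simps)

lemma beta_tail_mono:
  assumes "0 < c" "c \<le> s" "s \<le> t"
  shows "beta_tail c s \<le> beta_tail c t"
proof -
  have "c * ln (t / s) \<le> c * (t / s - 1)"
    using assms by (intro mult_left_mono ln_le_minus_one) auto
  also have "\<dots> = (c / s) * (t - s)"
    using assms by (simp add: field_simps)
  also have "\<dots> \<le> t - s"
    using assms by (intro mult_left_le_one_le) auto
  finally show ?thesis
    using assms by (simp add: beta_tail_def ln_div algebra_simps)
qed

lemma beta_midpoint_le:
  fixes a b c :: real
  assumes "0 < c"
  shows "beta c ((a + b) / 2) \<le> (beta c a + beta c b) / 2"
proof -
  have "beta c ((a + b) / 2) = beta_tail c (max ((a + b) / 2) c)"
    using assms by (rule beta_eq_beta_tail_max)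
  also have "\<dots> \<le> beta_tail c ((max a c + max b c) / 2)"
    using assms by (intro beta_tail_mono) (auto simp: max_def)
  also have "\<dots> = beta_tail c ((1 - 1/2) *\<^sub>R max a c + (1/2) *\<^sub>R max b c)"
    by (simp add: add_divide_distrib)
  also have "\<dots> \<le> (1 - 1/2) * beta_tail c (max a c) + (1/2) * beta_tail c (max b c)"
    using assms by (intro convex_onD[OF convex_on_beta_tail]) auto
  also have "\<dots> = (beta c a + beta c b) / 2"
    using assms by (simp add: beta_eq_beta_tail_max)
  finally show ?thesis .
qed

lemma continuous_on_beta:
  assumes "0 < c"
  shows "continuous_on UNIV (beta c)"
proof -
  have "beta c = (\<lambda>q. beta_tail c (max q c))"
    using assms by (simp add: beta_eq_beta_tail_max fun_eq_iff)
  moreover have "continuous_on UNIV (\<lambda>q. beta_tail c (max q c))"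
    unfolding beta_tail_def using assms by (intro continuous_intros) (auto simp: max_def)
  ultimately show ?thesis by simp
qed

lemma continuous_on_xlogx_r:
  assumes "0 < r"
  shows "continuous_on {0..} (\<lambda>x. xlogx_r x r)"
proof -
  have "continuous_on {0..} (\<lambda>x::real. x * ln x)"
    unfolding continuous_on_eq_continuous_within
  proof
    fix x :: real
    assume "x \<in> {0..}"
    show "continuous (at x within {0..}) (\<lambda>x. x * ln x)"
    proof (cases "x = 0")
      case True
      have "((\<lambda>x::real. x * ln x) \<longlongrightarrow> 0) (at_right 0)" by real_asymp
      with True show ?thesis by (simp add: continuous_within at_within_Ici_at_right)
    next
      case False
      with \<open>x \<in> {0..}\<close> have "isCont (\<lambda>x. x * ln x) x" by (intro continuous_intros) auto
      then show ?thesis by (rule continuous_at_imp_continuous_within)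
    qed
  qed
  then have "continuous_on {0..} (\<lambda>x. x * ln x - x * ln r)"
    by (rule continuous_on_diff) (intro continuous_intros)
  moreover have "x * ln x - x * ln r = xlogx_r x r" if "x \<in> {0..}" for x
    using that assms by (simp add: xlogx_r_def ln_div algebra_simps)
  ultimately show ?thesis
    by (rule continuous_on_eq)
qed

lemma continuous_on_app2 [continuous_intros]:
  "continuous_on A (\<lambda>X :: 'a \<Rightarrow> 'b \<Rightarrow> 'c::topological_space. X i j)"
proof -
  have "continuous_on UNIV (\<lambda>X :: 'a \<Rightarrow> 'b \<Rightarrow> 'c. X i)" by simp
  then have "continuous_on UNIV (\<lambda>X :: 'a \<Rightarrow> 'b \<Rightarrow> 'c. X i j)"
    by (rule continuous_on_product_then_coordinatewise)
  then show ?thesis by (rule continuous_on_subset) simp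
qed

lemma compact_PiE_UNIV:
  assumes "\<And>i. compact (A i)"
  shows "compact (PiE UNIV A :: ('a \<Rightarrow> 'b::topological_space) set)"
  using compactin_PiE[of "\<lambda>i. euclidean" UNIV A] assms by (simp add: euclidean_product_topology)

subsection \<open>The transport polytope\<close>

definition transport_plans :: "nat \<Rightarrow> nat \<Rightarrow> (nat \<Rightarrow> real) \<Rightarrow> (nat \<Rightarrow> nat \<Rightarrow> real) set" where
  "transport_plans m n r = {X. (\<forall>i<m. \<forall>j<n. 0 \<le> X i j) \<and> (\<forall>i<m. (\<Sum>j<n. X i j) = r i) \<and>
     (\<forall>i j. m \<le> i \<or> n \<le> j \<longrightarrow> X i j = 0)}"

definition station_load :: "nat \<Rightarrow> nat \<Rightarrow> real \<Rightarrow> (nat \<Rightarrow> nat \<Rightarrow> real) \<Rightarrow> nat \<Rightarrow> real" where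
  "station_load m n T X j = (if j < n then T * (\<Sum>i<m. X i j) else 0)"

definition midpoint_plan :: "(nat \<Rightarrow> nat \<Rightarrow> real) \<Rightarrow> (nat \<Rightarrow> nat \<Rightarrow> real) \<Rightarrow> nat \<Rightarrow> nat \<Rightarrow> real" where
  "midpoint_plan X Y i j = (X i j + Y i j) / 2"

lemma feasible_iff_transport_plan:
  assumes "0 < T"
  shows "feasible m n r T X q \<longleftrightarrow> X \<in> transport_plans m n r \<and> q = station_load m n T X"
proof
  assume feasible: "feasible m n r T X q"
  then have "q j = station_load m n T X j" for j
    using assms by (cases "j < n") (auto simp: feasible_def station_load_def field_simps)
  with feasible show "X \<in> transport_plans m n r \<and> q = station_load m n T X"
    by (auto simp: feasible_def transport_plans_def)
next
  assume "X \<in> transport_plans m n r \<and> q = station_load m n T X"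
  with assms show "feasible m n r T X q"
    by (auto simp: feasible_def transport_plans_def station_load_def)
qed

lemma uniform_plan_in_transport_plans:
  assumes "0 < n" "\<forall>i<m. 0 \<le> r i"
  shows "(\<lambda>i j. if i < m \<and> j < n then r i / real n else 0) \<in> transport_plans m n r"
  using assms by (auto simp: transport_plans_def)

lemma transport_plans_subset_box:
  "transport_plans m n r \<subseteq> PiE UNIV (\<lambda>i. PiE UNIV (\<lambda>j. if i < m \<and> j < n then {0..r i} else {0}))"
proof
  fix X assume X: "X \<in> transport_plans m n r"
  have "X i j \<le> r i" if "i < m" "j < n" for i j
    using X that member_le_sum[of j "{..<n}" "X i"] by (auto simp: transport_plans_def)
  with X show "X \<in> PiE UNIV (\<lambda>i. PiE UNIV (\<lambda>j. if i < m \<and> j < n then {0..r i} else {0}))"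
    by (auto simp: transport_plans_def)
qed

lemma closed_transport_plans: "closed (transport_plans m n r)"
proof -
  have "transport_plans m n r =
      (\<Inter>i<m. \<Inter>j<n. {X. 0 \<le> X i j}) \<inter> (\<Inter>i<m. {X. (\<Sum>j<n. X i j) = r i}) \<inter>
      (\<Inter>i. \<Inter>j. if m \<le> i \<or> n \<le> j then {X. X i j = 0} else UNIV)"
    by (auto simp: transport_plans_def split: if_splits)
  also have "closed \<dots>"
    by (intro closed_Int closed_INT closed_Collect_le closed_Collect_eq closed_UNIV
        continuous_intros ballI) (simp add: closed_Collect_eq continuous_on_app2)
  finally show ?thesis .
qed

lemma compact_transport_plans: "compact (transport_plans m n r)"
proof -
  have "compact (PiE UNIV (\<lambda>i. PiE UNIV (\<lambda>j. if i < m \<and> j < n then {0..r i} else {0})))"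
    by (intro compact_PiE_UNIV) auto
  then have "compact (PiE UNIV (\<lambda>i. PiE UNIV (\<lambda>j. if i < m \<and> j < n then {0..r i} else {0}))
      \<inter> transport_plans m n r)"
    using closed_transport_plans by (rule compact_Int_closed)
  with transport_plans_subset_box show ?thesis by (simp add: Int_absorb1)
qed

lemma midpoint_plan_in_transport_plans:
  "X \<in> transport_plans m n r \<Longrightarrow> Y \<in> transport_plans m n r \<Longrightarrow>
    midpoint_plan X Y \<in> transport_plans m n r"
  by (auto simp: transport_plans_def midpoint_plan_def sum.distrib
      sum_divide_distrib[symmetric])

lemma station_load_midpoint_plan:
  "station_load m n T (midpoint_plan X Y) =
    (\<lambda>j. (station_load m n T X j + station_load m n T Y j) / 2)"
  by (auto simp: station_load_def midpoint_plan_def sum.distrib sum_divide_distrib[symmetric]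
      field_simps)

lemma transport_plans_differ:
  assumes "X \<in> transport_plans m n r" "Y \<in> transport_plans m n r" "X \<noteq> Y"
  obtains i j where "i < m" "j < n" "X i j \<noteq> Y i j"
proof -
  from \<open>X \<noteq> Y\<close> obtain i j where "X i j \<noteq> Y i j" by (metis ext)
  moreover from this assms(1,2) have "i < m" "j < n"
    by (auto simp: transport_plans_def not_le[symmetric])
  ultimately show thesis using that by blast
qed

lemma sum2_strict_mono_ex1:
  fixes f g :: "nat \<Rightarrow> nat \<Rightarrow> real"
  assumes "\<forall>i<m. \<forall>j<n. f i j \<le> g i j" "i0 < m" "j0 < n" "f i0 j0 < g i0 j0"
  shows "(\<Sum>i<m. \<Sum>j<n. f i j) < (\<Sum>i<m. \<Sum>j<n. g i j)"
proof -
  have "(\<Sum>(i, j)\<in>{..<m} \<times> {..<n}. f i j) < (\<Sum>(i, j)\<in>{..<m} \<times> {..<n}. g i j)"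
    using assms by (intro sum_strict_mono_ex1) auto
  then show ?thesis by (simp add: sum.cartesian_product)
qed

lemma cost_midpoint_less:
  assumes c: "\<forall>j<n. 0 < c j" and r: "\<forall>i<m. 0 < r i" and "0 < \<epsilon>"
    and X: "\<forall>i<m. \<forall>j<n. 0 \<le> X i j" and Y: "\<forall>i<m. \<forall>j<n. 0 \<le> Y i j"
    and differ: "i0 < m" "j0 < n" "X i0 j0 \<noteq> Y i0 j0"
  shows "cost m n c r \<kappa> \<epsilon> (midpoint_plan X Y) (\<lambda>j. (p j + q j) / 2)
    < (cost m n c r \<kappa> \<epsilon> X p + cost m n c r \<kappa> \<epsilon> Y q) / 2"
proof -
  have transport: "(\<Sum>i<m. \<Sum>j<n. \<kappa> i j * midpoint_plan X Y i j)
      = ((\<Sum>i<m. \<Sum>j<n. \<kappa> i j * X i j) + (\<Sum>i<m. \<Sum>j<n. \<kappa> i j * Y i j)) / 2"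
    by (simp add: midpoint_plan_def sum.distrib sum_divide_distrib[symmetric] field_simps)
  have "(\<Sum>j<n. beta (c j) ((p j + q j) / 2)) \<le> (\<Sum>j<n. (beta (c j) (p j) + beta (c j) (q j)) / 2)"
    using c by (intro sum_mono beta_midpoint_le) auto
  then have congestion: "(\<Sum>j<n. beta (c j) ((p j + q j) / 2))
      \<le> ((\<Sum>j<n. beta (c j) (p j)) + (\<Sum>j<n. beta (c j) (q j))) / 2"
    by (simp add: sum.distrib sum_divide_distrib[symmetric])
  have "(\<Sum>i<m. \<Sum>j<n. xlogx_r (midpoint_plan X Y i j) (r i))
      < (\<Sum>i<m. \<Sum>j<n. (xlogx_r (X i j) (r i) + xlogx_r (Y i j) (r i)) / 2)"
    using X Y r differ unfolding midpoint_plan_def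
    by (intro sum2_strict_mono_ex1 allI impI xlogx_r_midpoint_le xlogx_r_midpoint_less) auto
  then have entropy: "(\<Sum>i<m. \<Sum>j<n. xlogx_r (midpoint_plan X Y i j) (r i))
      < ((\<Sum>i<m. \<Sum>j<n. xlogx_r (X i j) (r i)) + (\<Sum>i<m. \<Sum>j<n. xlogx_r (Y i j) (r i))) / 2"
    by (simp add: sum.distrib sum_divide_distrib[symmetric])
  show ?thesis
    using transport congestion mult_strict_left_mono[OF entropy \<open>0 < \<epsilon>\<close>]
    unfolding cost_def by (simp add: field_simps)
qed

lemma cost_midpoint_plan_less:
  assumes "\<forall>j<n. 0 < c j" "\<forall>i<m. 0 < r i" "0 < \<epsilon>"
    and X: "X \<in> transport_plans m n r" and Y: "Y \<in> transport_plans m n r" and "X \<noteq> Y"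
  shows "cost m n c r \<kappa> \<epsilon> (midpoint_plan X Y) (station_load m n T (midpoint_plan X Y))
    < (cost m n c r \<kappa> \<epsilon> X (station_load m n T X) + cost m n c r \<kappa> \<epsilon> Y (station_load m n T Y)) / 2"
proof -
  obtain i j where "i < m" "j < n" "X i j \<noteq> Y i j"
    using transport_plans_differ[OF X Y \<open>X \<noteq> Y\<close>] .
  with assms show ?thesis
    unfolding station_load_midpoint_plan
    by (intro cost_midpoint_less) (auto simp: transport_plans_def)
qed

lemma continuous_on_cost_transport_plans:
  assumes c: "\<forall>j<n. 0 < c j" and r: "\<forall>i<m. 0 < r i"
  shows "continuous_on (transport_plans m n r) (\<lambda>X. cost m n c r \<kappa> \<epsilon> X (station_load m n T X))"
proof -
  have "continuous_on (transport_plans m n r) (\<lambda>X. beta (c j) (station_load m n T X j))"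
    if "j < n" for j
  proof -
    have "continuous_on (transport_plans m n r) (\<lambda>X. station_load m n T X j)"
      using that by (simp add: station_load_def) (intro continuous_intros)
    with continuous_on_beta c that show ?thesis
      by (auto intro: continuous_on_compose2[of UNIV "beta (c j)"])
  qed
  moreover have "continuous_on (transport_plans m n r) (\<lambda>X. xlogx_r (X i j) (r i))"
    if "i < m" "j < n" for i j
    using that r by (intro continuous_on_compose2[OF continuous_on_xlogx_r continuous_on_app2])
      (auto simp: transport_plans_def)
  ultimately show ?thesis
    unfolding cost_def by (intro continuous_intros) auto
qed

lemma optimal_iff_minimizer:
  assumes "0 < T"
  shows "optimal m n c r T \<kappa> \<epsilon> X q \<longleftrightarrow>
    (X \<in> transport_plans m n r \<and>
      (\<forall>Y \<in> transport_plans m n r. cost m n c r \<kappa> \<epsilon> X (station_load m n T X)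
        \<le> cost m n c r \<kappa> \<epsilon> Y (station_load m n T Y))) \<and>
    q = station_load m n T X"
  using assms by (auto simp: optimal_def feasible_iff_transport_plan)

theorem proposition1:
  fixes m n :: nat and c r :: "nat \<Rightarrow> real" and \<kappa> :: "nat \<Rightarrow> nat \<Rightarrow> real"
    and T \<epsilon> :: real
  assumes "n \<ge> 1" and "m \<ge> 1"
    and "\<forall>j<n. c j > 0" and "T > 0" and "\<epsilon> > 0"
    and "\<forall>i<m. r i > 0"
    and "\<forall>i<m. \<forall>j<n. \<kappa> i j \<ge> 0"
  shows "(\<exists>X q. feasible m n r T X q) \<and>
         (\<exists>!Xq. optimal m n c r T \<kappa> \<epsilon> (fst Xq) (snd Xq))"
proof -
  note c = assms(3) and T = assms(4) and \<epsilon> = assms(5) and r = assms(6)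
  define P where "P = transport_plans m n r"
  define f where "f X = cost m n c r \<kappa> \<epsilon> X (station_load m n T X)" for X
  have "P \<noteq> {}"
    using uniform_plan_in_transport_plans[of n m r] assms(1) r by (force simp: P_def)
  have "\<exists>!X. X \<in> P \<and> (\<forall>Y\<in>P. f X \<le> f Y)"
  proof (rule ex1_minimizer_midpoint[where mid = midpoint_plan])
    show "compact P" "P \<noteq> {}" "continuous_on P f"
      using compact_transport_plans \<open>P \<noteq> {}\<close> continuous_on_cost_transport_plans[OF c r]
      by (simp_all add: P_def f_def)
    fix X Y assume "X \<in> P" "Y \<in> P" "X \<noteq> Y"
    then show "midpoint_plan X Y \<in> P \<and> f (midpoint_plan X Y) < (f X + f Y) / 2"
      using c r \<epsilon> unfolding P_def f_def
      by (blast intro: midpoint_plan_in_transport_plans cost_midpoint_plan_less)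
  qed
  then have "\<exists>!Xq. (fst Xq \<in> P \<and> (\<forall>Y\<in>P. f (fst Xq) \<le> f Y)) \<and>
      snd Xq = station_load m n T (fst Xq)"
    by (rule ex1_graph)
  then have "\<exists>!Xq. optimal m n c r T \<kappa> \<epsilon> (fst Xq) (snd Xq)"
    by (simp add: optimal_iff_minimizer[OF T] P_def f_def)
  moreover have "\<exists>X q. feasible m n r T X q"
    using \<open>P \<noteq> {}\<close> T by (auto simp: feasible_iff_transport_plan P_def)
  ultimately show ?thesis by blast
qed

end
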